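(* Let $\mathcal{D} \subset \mathbb{R}^d$ be a finite nonempty set of vectors and let $q \in \mathbb{R}^d$. Then there exists a scalar $\bar{\mu} \in \mathbb{R}$ such that for every $\mu > \max(\bar{\mu}, 0)$, every nearest neighbor of $q' = \mu q$ in $\mathcal{D}$ is a maximum inner product solution for $q$; that is, if $p \in \mathcal{D}$ satisfies $\lVert p - \mu q\rVert \le \lVert p' - \mu q\rVert$ for all $p' \in \mathcal{D}$, then $\langle p, q\rangle \ge \langle p', q\rangle$ for all $p' \in \mathcal{D}$.
   Context: $\lVert\cdot\rVert$ is the Euclidean ($L_2$) norm and $\langle\cdot,\cdot\rangle$ the standard inner product on $\mathbb{R}^d$. A nearest neighbor of a vector $x$ in $\mathcal{D}$ is a point of $\mathcal{D}$ minimizing the Euclidean distance to $x$; a maximum inner product solution for $q$ is a point of $\mathcal{D}$ maximizing $\langle \cdot, q\rangle$ over $\mathcal{D}$. *)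

theory Defs
  imports "HOL-Analysis.Analysis"
begin

end

theory Submission
  imports Defs
begin

text \<open>Since \<open>\<parallel>p - \<mu> q\<parallel>\<^sup>2 = \<parallel>p\<parallel>\<^sup>2 - 2\<mu>\<langle>p,q\<rangle> + \<mu>\<^sup>2\<parallel>q\<parallel>\<^sup>2\<close>, a nearest neighbour of \<open>\<mu> q\<close>
  minimises \<open>\<parallel>p\<parallel>\<^sup>2 - 2\<mu>\<langle>p,q\<rangle>\<close>. For a pair \<open>a, b\<close> with \<open>\<langle>a,q\<rangle> > \<langle>b,q\<rangle>\<close> the
  term \<open>2\<mu>\<langle>a - b, q\<rangle>\<close> eventually dominates the fixed difference \<open>\<parallel>a\<parallel>\<^sup>2 - \<parallel>b\<parallel>\<^sup>2\<close>, and
  as \<open>\<D>\<close> has only finitely many pairs, one threshold \<open>\<mu>\<close> serves them all.\<close>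

lemma norm_diff_scaleR_power2:
  fixes p q :: "'a::real_inner"
  shows "(norm (p - mu *\<^sub>R q))\<^sup>2 = (norm p)\<^sup>2 - 2 * mu * inner p q + mu\<^sup>2 * (norm q)\<^sup>2"
  unfolding power2_norm_eq_inner
  by (simp add: inner_diff_left inner_diff_right inner_commute power2_eq_square algebra_simps)

lemma closer_to_scaled_imp_inner_gap_le:
  fixes p p' q :: "'a::real_inner"
  assumes "norm (p - mu *\<^sub>R q) \<le> norm (p' - mu *\<^sub>R q)"
  shows "2 * mu * (inner p' q - inner p q) \<le> (norm p')\<^sup>2 - (norm p)\<^sup>2"
proof -
  have "(norm (p - mu *\<^sub>R q))\<^sup>2 \<le> (norm (p' - mu *\<^sub>R q))\<^sup>2"
    using assms by (simp add: power_mono)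
  then show ?thesis
    by (simp add: norm_diff_scaleR_power2 algebra_simps)
qed

lemma finite_inner_gap_threshold:
  fixes D :: "'a::real_inner set"
  assumes "finite D"
  obtains mu_bar where
    "\<And>mu a b. mu > mu_bar \<Longrightarrow> a \<in> D \<Longrightarrow> b \<in> D \<Longrightarrow> inner b q < inner a q \<Longrightarrow>
       (norm a)\<^sup>2 - (norm b)\<^sup>2 < 2 * mu * (inner a q - inner b q)"
proof -
  define t where "t = (\<lambda>(a, b). ((norm a)\<^sup>2 - (norm b)\<^sup>2) / (2 * (inner a q - inner b q)))"
  have "bdd_above (t ` (D \<times> D))"
    using assms by (intro bdd_above_finite) simp
  then obtain M where M: "\<And>a b. a \<in> D \<Longrightarrow> b \<in> D \<Longrightarrow> t (a, b) \<le> M"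
    by (auto simp: bdd_above_def)
  show thesis
  proof (rule that)
    fix mu a b
    assume "mu > M" "a \<in> D" "b \<in> D" and gap: "inner b q < inner a q"
    then have "((norm a)\<^sup>2 - (norm b)\<^sup>2) / (2 * (inner a q - inner b q)) < mu"
      using M[of a b] by (simp add: t_def)
    then show "(norm a)\<^sup>2 - (norm b)\<^sup>2 < 2 * mu * (inner a q - inner b q)"
      using gap by (simp add: pos_divide_less_eq algebra_simps)
  qed
qed

theorem theorem1:
  fixes D :: "(real ^ 'd) set" and q :: "real ^ 'd"
  assumes "finite D" and "D \<noteq> {}"
  shows "\<exists>mu_bar :: real. \<forall>mu :: real. mu > max mu_bar 0 \<longrightarrow>
           (\<forall>p\<in>D. (\<forall>p'\<in>D. norm (p - mu *\<^sub>R q) \<le> norm (p' - mu *\<^sub>R q))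
              \<longrightarrow> (\<forall>p'\<in>D. inner p q \<ge> inner p' q))"
proof -
  obtain mu_bar where threshold:
    "\<And>mu a b. mu > mu_bar \<Longrightarrow> a \<in> D \<Longrightarrow> b \<in> D \<Longrightarrow> inner b q < inner a q \<Longrightarrow>
       (norm a)\<^sup>2 - (norm b)\<^sup>2 < 2 * mu * (inner a q - inner b q)"
    using finite_inner_gap_threshold[OF \<open>finite D\<close>] by blast
  show ?thesis
  proof (intro exI[of _ mu_bar] allI impI ballI)
    fix mu p p'
    assume "mu > max mu_bar 0" "p \<in> D" "p' \<in> D"
      and nearest: "\<forall>p'\<in>D. norm (p - mu *\<^sub>R q) \<le> norm (p' - mu *\<^sub>R q)"
    then have "2 * mu * (inner p' q - inner p q) \<le> (norm p')\<^sup>2 - (norm p)\<^sup>2"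
      by (intro closer_to_scaled_imp_inner_gap_le) blast
    then show "inner p' q \<le> inner p q"
      using threshold[of mu p' p] \<open>mu > max mu_bar 0\<close> \<open>p \<in> D\<close> \<open>p' \<in> D\<close> by force
  qed
qed

end
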